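(* Let $T\ge 2$, let $z_{1:T}\in[V]^T$ with last token $z_T=q$, and suppose the orthonormality assumption (A) holds. For $v\in[V]$ let $f(v)=\#\{s\in\{2,\dots,T\}: z_{s-1}=q,\ z_s=v\}$, the number of occurrences of the pattern "$q\,v$" in $z_{1:T}$. Let $N=\sum_{v'=1}^{V}f(v')+\mathbf 1\{z_1=q\}$ and assume $N\ge 1$. Then for every $v\in[V]$ and every fixed $\tau_3>0$, $$\lim_{\tau_2\to\infty}\ \lim_{\tau_1\to\infty}\ \xi_v(\tau_1,\tau_2,\tau_3)\;=\;\log\pi_b(v\mid q)\;+\;\tau_3\cdot\frac{f(v)+\mathbf 1\{v=q\}\,\mathbf 1\{z_1=q\}}{N}.$$
   Context: Vocabulary $[V]=\{1,\dots,V\}$, dimension $d$. Given: embedding vectors $w_E(v)\in\mathbb R^d$ and unembedding vectors $w_U(v)\in\mathbb R^d$ for $v\in[V]$; relative positional vectors $r_0,r_{-1},\dots,r_{-(T-1)}\in\mathbb R^d$; matrices $\Phi_1,W_V^2\in\mathbb R^{d\times d}$; a bigram kernel $\pi_b(u\mid v)>0$ with $\sum_u\pi_b(u\mid v)=1$; parameters $\tau_1,\tau_2,\tau_3>0$. $\sigma$ denotes the softmax. The two-layer transformer with relative positional encoding ("stronger associative memory transformer") acts on $z_{1:T}\in[V]^T$ as follows. Set $W_K^1=\tau_1\sum_{k\in[V]}w_E(k)r_{-1}^\top$, $W_K^2=\tau_2\sum_{k\in[V]}w_E(k)(\Phi_1w_E(k))^\top$, $W_O^2=\tau_3\sum_{v\in[V]}w_U(v)(W_V^2w_E(v))^\top$.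 First layer: for $t\in[T]$ and $s\in[t]$, let $a_{t,s}=(w_E(z_s)+r_{s-t})^\top (W_K^1)^\top w_E(z_t)$ and $x^{(1)}_t=\sum_{s=1}^t\sigma(a_{t,\cdot})_s\,\Phi_1w_E(z_s)+w_E(z_t)$. Second layer: for $s\in[T]$ let $b_s=(x_s^{(1)})^\top (W_K^2)^\top x_T^{(1)}$ and $x_T^{(2)}=\sum_{s=1}^T\sigma(b)_s\,W_O^2W_V^2x_s^{(1)}+x_T^{(1)}$. Feed-forward layer: $W_1\in\mathbb R^{V\times d}$ has $v$-th row $w_E(v)^\top$, $W_2\in\mathbb R^{d\times V}$ has $v$-th column $\sum_{u=1}^V\log\pi_b(u\mid v)\,w_U(u)$, and $x_T=W_2\,\mathrm{ReLU}(W_1x_T^{(2)})+x_T^{(2)}$. The logits are $\xi_v=w_U(v)^\top x_T$ for $v\in[V]$ (written $\xi_v(\tau_1,\tau_2,\tau_3)$ to show dependence on the parameters). The associative memory transformer is the case $\tau_1=\tau_2=\tau_3=1$. Orthonormality assumption (A): the $3V+T$ vectors $w_E(v),\ \Phi_1w_E(v),\ w_U(v)$ ($v\in[V]$) and $r_{-i}$ ($0\le i\le T-1$) form an orthonormal family in $\mathbb R^d$, and the $2V$ vectors $W_V^2w_E(v),\ W_V^2\Phi_1w_E(v)$ ($v\in[V]$) form an orthonormal family in $\mathbb R^d$. *)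

theory Defs
  imports "HOL-Analysis.Analysis"
begin

text \<open>Vocabulary [V] is the finite type 'v (V = CARD('v)); the ambient space R^d is real^'d.
  Positions are natural numbers 1..T; a token sequence is z :: nat => 'v (only z 1..z T matter).
  Relative positional vectors: r i stands for r_{-i}, 0 <= i <= T-1.
  pib u w stands for pi_b(u | w).\<close>

definition outer :: "real^'n \<Rightarrow> real^'m \<Rightarrow> real^'m^'n" where
  "outer x y = (\<chi> i j. x $ i * y $ j)"

definition softmax :: "'a set \<Rightarrow> ('a \<Rightarrow> real) \<Rightarrow> 'a \<Rightarrow> real" where
  "softmax A a s = exp (a s) / (\<Sum>s'\<in>A. exp (a s'))"

definition xi :: "('v::finite \<Rightarrow> real^'d::finite) \<Rightarrow> ('v \<Rightarrow> real^'d) \<Rightarrow> (nat \<Rightarrow> real^'d)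
    \<Rightarrow> real^'d^'d \<Rightarrow> real^'d^'d \<Rightarrow> ('v \<Rightarrow> 'v \<Rightarrow> real) \<Rightarrow> nat \<Rightarrow> (nat \<Rightarrow> 'v)
    \<Rightarrow> real \<Rightarrow> real \<Rightarrow> real \<Rightarrow> 'v \<Rightarrow> real" where
  "xi wE wU r \<Phi>1 WV2 pib T z \<tau>1 \<tau>2 \<tau>3 v = (let
     WK1 = \<tau>1 *\<^sub>R (\<Sum>k\<in>UNIV. outer (wE k) (r 1));
     WK2 = \<tau>2 *\<^sub>R (\<Sum>k\<in>UNIV. outer (wE k) (\<Phi>1 *v wE k));
     WO2 = \<tau>3 *\<^sub>R (\<Sum>u\<in>UNIV. outer (wU u) (WV2 *v wE u));
     a = (\<lambda>t s. (wE (z s) + r (t - s)) \<bullet> (transpose WK1 *v wE (z t)));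
     x1 = (\<lambda>t. (\<Sum>s\<in>{1..t}. softmax {1..t} (a t) s *\<^sub>R (\<Phi>1 *v wE (z s))) + wE (z t));
     b = (\<lambda>s. x1 s \<bullet> (transpose WK2 *v x1 T));
     x2 = (\<Sum>s\<in>{1..T}. softmax {1..T} b s *\<^sub>R ((WO2 ** WV2) *v x1 s)) + x1 T;
     W1 = ((\<chi> u. wE u) :: real^'d^'v);
     W2 = ((\<chi> i u. (\<Sum>w\<in>UNIV. ln (pib w u) *\<^sub>R wU w) $ i) :: real^'v^'d);
     xT = W2 *v (\<chi> u. max 0 ((W1 *v x2) $ u)) + x2
   in wU v \<bullet> xT)"

datatype 'v oidx = OE 'v | OP 'v | OU 'v | OR nat

definition orthonormal_A :: "('v::finite \<Rightarrow> real^'d::finite) \<Rightarrow> ('v \<Rightarrow> real^'d) \<Rightarrow> (nat \<Rightarrow> real^'d)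
    \<Rightarrow> real^'d^'d \<Rightarrow> real^'d^'d \<Rightarrow> nat \<Rightarrow> bool" where
  "orthonormal_A wE wU r \<Phi>1 WV2 T \<longleftrightarrow>
     (let F = (\<lambda>i. case i of OE v \<Rightarrow> wE v | OP v \<Rightarrow> \<Phi>1 *v wE v | OU v \<Rightarrow> wU v | OR n \<Rightarrow> r n);
          I = range OE \<union> range OP \<union> range OU \<union> OR ` {..<T};
          G = (\<lambda>i. case i of Inl v \<Rightarrow> WV2 *v wE v | Inr v \<Rightarrow> WV2 *v (\<Phi>1 *v wE v))
      in (\<forall>i\<in>I. \<forall>j\<in>I. F i \<bullet> F j = (if i = j then 1 else 0)) \<and>
         (\<forall>i j. G i \<bullet> G j = (if i = j then 1 else 0)))"

definition pattern_count :: "(nat \<Rightarrow> 'v) \<Rightarrow> nat \<Rightarrow> 'v \<Rightarrow> 'v \<Rightarrow> nat" where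
  "pattern_count z T q v = card {s\<in>{2..T}. z (s - 1) = q \<and> z s = v}"

definition Ncount :: "(nat \<Rightarrow> 'v::finite) \<Rightarrow> nat \<Rightarrow> 'v \<Rightarrow> nat" where
  "Ncount z T q = (\<Sum>v'\<in>UNIV. pattern_count z T q v') + (if z 1 = q then 1 else 0)"

end

theory Submission
  imports Defs
begin

text \<open>Under the orthonormality assumption every score, key and value of the network collapses to
  an inner product of basis vectors. The first-layer score of position \<open>s\<close> seen from \<open>t\<close> is
  \<open>\<tau>\<^sub>1 [s + 1 = t]\<close>, so as \<open>\<tau>\<^sub>1 \<rightarrow> \<infinity>\<close> position \<open>t\<close> copies \<open>\<Phi>\<^sub>1 w\<^sub>E(z (t - 1))\<close> (position 1 copies
  itself). The query \<open>\<Phi>\<^sub>1 w\<^sub>E(q)\<close> of the last position then scores \<open>s\<close> by \<open>\<tau>\<^sub>2 [z (s - 1) = q]\<close> and the value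
  at \<open>s\<close> is \<open>\<tau>\<^sub>3 w\<^sub>U(z s)\<close>; as \<open>\<tau>\<^sub>2 \<rightarrow> \<infinity>\<close> the attention becomes uniform on the \<open>N\<close> positions whose
  predecessor is \<open>q\<close>, which yields the count term. The ReLU layer sees only \<open>w\<^sub>E(q)\<close> and adds the
  bigram logit \<open>log \<pi>\<^sub>b(v | q)\<close>.\<close>

lemma sum_outer_mult_vec:
  "(\<Sum>k\<in>S. outer (f k :: real^'n::finite) (g k :: real^'m::finite)) *v w = (\<Sum>k\<in>S. (g k \<bullet> w) *\<^sub>R f k)"
proof (subst vec_eq_iff, intro allI)
  fix i
  have "((\<Sum>k\<in>S. outer (f k) (g k)) *v w) $ i = (\<Sum>j\<in>UNIV. \<Sum>k\<in>S. f k $ i * g k $ j * w $ j)"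
    by (simp add: matrix_vector_mult_def outer_def sum_distrib_right)
  also have "\<dots> = (\<Sum>k\<in>S. (g k \<bullet> w) * f k $ i)"
    by (subst sum.swap) (simp add: inner_vec_def sum_distrib_left sum_distrib_right mult_ac)
  finally show "((\<Sum>k\<in>S. outer (f k) (g k)) *v w) $ i = (\<Sum>k\<in>S. (g k \<bullet> w) *\<^sub>R f k) $ i"
    by simp
qed

lemma transpose_sum_outer_mult_vec:
  "transpose (\<Sum>k\<in>S. outer (f k :: real^'n::finite) (g k :: real^'m::finite)) *v w = (\<Sum>k\<in>S. (f k \<bullet> w) *\<^sub>R g k)"
proof (subst vec_eq_iff, intro allI)
  fix i
  have "(transpose (\<Sum>k\<in>S. outer (f k) (g k)) *v w) $ i = (\<Sum>j\<in>UNIV. \<Sum>k\<in>S. f k $ j * g k $ i * w $ j)"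
    by (simp add: matrix_vector_mult_def outer_def transpose_def sum_distrib_right)
  also have "\<dots> = (\<Sum>k\<in>S. (f k \<bullet> w) * g k $ i)"
    by (subst sum.swap) (simp add: inner_vec_def sum_distrib_left sum_distrib_right mult_ac)
  finally show "(transpose (\<Sum>k\<in>S. outer (f k) (g k)) *v w) $ i = (\<Sum>k\<in>S. (f k \<bullet> w) *\<^sub>R g k) $ i"
    by simp
qed

lemma scaleR_indicator [simp]: "(if P then 1 else 0) *\<^sub>R (x::'a::real_vector) = (if P then x else 0)"
  by simp

lemma softmax_cong:
  "(\<And>x. x \<in> A \<Longrightarrow> f x = g x) \<Longrightarrow> s \<in> A \<Longrightarrow> softmax A f s = softmax A g s"
  unfolding softmax_def by (simp cong: sum.cong)

lemma tendsto_softmax: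
  assumes "finite A" "A \<noteq> {}" "s \<in> A" "\<And>s. s \<in> A \<Longrightarrow> ((\<lambda>x. f x s) \<longlongrightarrow> L s) F"
  shows "((\<lambda>x. softmax A (f x) s) \<longlongrightarrow> softmax A L s) F"
proof -
  have "(\<Sum>s'\<in>A. exp (L s')) > 0"
    using assms(1,2) by (intro sum_pos) auto
  then show ?thesis
    unfolding softmax_def using assms by (intro tendsto_divide tendsto_exp tendsto_sum) auto
qed

lemma tendsto_softmax_scaled_01:
  fixes C :: "'a \<Rightarrow> real"
  assumes "finite A" and "s \<in> A" and C01: "\<And>x. x \<in> A \<Longrightarrow> C x = 0 \<or> C x = 1"
    and K_pos: "(\<Sum>x\<in>A. C x) > 0"
  shows "((\<lambda>\<tau>. softmax A (\<lambda>x. \<tau> * C x) s) \<longlongrightarrow> C s / (\<Sum>x\<in>A. C x)) at_top"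
proof -
  define K where "K = (\<Sum>x\<in>A. C x)"
  define M where "M = (\<Sum>x\<in>A. 1 - C x)"
  have exp_01: "exp (\<tau> * C x) = C x * exp \<tau> + (1 - C x)" if "x \<in> A" for \<tau> x
    using C01[OF that] by auto
  have M_nonneg: "M \<ge> 0"
    unfolding M_def using C01 by (intro sum_nonneg) fastforce
  have softmax_eq: "softmax A (\<lambda>x. \<tau> * C x) s = (C s + (1 - C s) * exp (- \<tau>)) / (K + M * exp (- \<tau>))"
    for \<tau>
  proof -
    have "(\<Sum>x\<in>A. exp (\<tau> * C x)) = K * exp \<tau> + M"
      by (simp add: exp_01 K_def M_def sum.distrib sum_distrib_right cong: sum.cong)
    moreover have "K * exp \<tau> + M > 0" "K + M * exp (- \<tau>) > 0"
      using K_pos M_nonneg by (simp_all add: K_def add_pos_nonneg)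
    ultimately show ?thesis
      unfolding softmax_def using exp_01[OF \<open>s \<in> A\<close>] by (simp add: divide_simps exp_minus)
  qed
  have "((\<lambda>x::real. exp (- x)) \<longlongrightarrow> 0) at_top"
    by (intro filterlim_compose[OF exp_at_bot] filterlim_uminus_at_bot_at_top)
  then have "((\<lambda>\<tau>. (C s + (1 - C s) * exp (- \<tau>)) / (K + M * exp (- \<tau>)))
      \<longlongrightarrow> (C s + (1 - C s) * 0) / (K + M * 0)) at_top"
    using K_pos unfolding K_def by (intro tendsto_intros) auto
  then show ?thesis
    unfolding softmax_eq K_def by simp
qed

definition prev_attention :: "real \<Rightarrow> nat \<Rightarrow> nat \<Rightarrow> real" where
  "prev_attention \<tau> t = softmax {1..t} (\<lambda>s. \<tau> * (if s + 1 = t then 1 else 0))"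

definition attention_on_token :: "(nat \<Rightarrow> 'v) \<Rightarrow> 'v \<Rightarrow> real \<Rightarrow> nat \<Rightarrow> real" where
  "attention_on_token z q \<tau> t = (\<Sum>s\<in>{1..t}. prev_attention \<tau> t s * (if z s = q then 1 else 0))"

definition prev_token_is :: "(nat \<Rightarrow> 'v) \<Rightarrow> 'v \<Rightarrow> nat \<Rightarrow> real" where
  "prev_token_is z q t = (if z (if t = 1 then 1 else t - 1) = q then 1 else 0)"

lemma sum_indicator_pred:
  fixes f :: "nat \<Rightarrow> real"
  assumes "t \<ge> 2"
  shows "(\<Sum>s\<in>{1..t}. (if s + 1 = t then 1 else 0) * f s) = f (t - 1)"
proof -
  have "(\<Sum>s\<in>{1..t}. (if s + 1 = t then 1 else 0) * f s) = (\<Sum>s\<in>{1..t}. if s = t - 1 then f s else 0)"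
    using assms by (intro sum.cong) auto
  also have "\<dots> = f (t - 1)"
    using assms by (simp add: sum.delta)
  finally show ?thesis .
qed

lemma tendsto_attention_on_token:
  assumes "t \<ge> 1"
  shows "((\<lambda>\<tau>. attention_on_token z q \<tau> t) \<longlongrightarrow> prev_token_is z q t) at_top"
proof (cases "t = 1")
  case True
  then show ?thesis
    by (simp add: attention_on_token_def prev_token_is_def prev_attention_def softmax_def)
next
  case False
  with assms have t: "t \<ge> 2" by simp
  have "((\<lambda>\<tau>. prev_attention \<tau> t s) \<longlongrightarrow> (if s + 1 = t then 1 else 0)) at_top" if "s \<in> {1..t}" for s
    using tendsto_softmax_scaled_01[OF _ that, of "\<lambda>s. if s + 1 = t then 1 else 0"]
      sum_indicator_pred[OF t, of "\<lambda>_. 1"]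
    by (simp add: prev_attention_def)
  then have "((\<lambda>\<tau>. attention_on_token z q \<tau> t)
      \<longlongrightarrow> (\<Sum>s\<in>{1..t}. (if s + 1 = t then 1 else 0) * (if z s = q then 1 else 0))) at_top"
    unfolding attention_on_token_def by (intro tendsto_sum tendsto_mult_right) auto
  then show ?thesis
    using sum_indicator_pred[OF t, of "\<lambda>s. if z s = q then 1 else 0"] False
    by (simp add: prev_token_is_def)
qed

locale orthonormal_transformer =
  fixes wE wU :: "'v::finite \<Rightarrow> real^'d::finite" and r :: "nat \<Rightarrow> real^'d"
    and \<Phi>1 WV2 :: "real^'d^'d" and T :: nat
  assumes orthonormal: "orthonormal_A wE wU r \<Phi>1 WV2 T"
    and T_ge_2: "T \<ge> 2"
begin

lemma inner_basis:
  shows "wE i \<bullet> wE j = (if i = j then 1 else 0)"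
    "wE i \<bullet> (\<Phi>1 *v wE j) = 0" "(\<Phi>1 *v wE j) \<bullet> wE i = 0"
    "(\<Phi>1 *v wE i) \<bullet> (\<Phi>1 *v wE j) = (if i = j then 1 else 0)"
    "wE i \<bullet> wU j = 0" "wU j \<bullet> wE i = 0"
    "(\<Phi>1 *v wE i) \<bullet> wU j = 0" "wU j \<bullet> (\<Phi>1 *v wE i) = 0"
    "wU i \<bullet> wU j = (if i = j then 1 else 0)"
    "n < T \<Longrightarrow> wE i \<bullet> r n = 0" "n < T \<Longrightarrow> r n \<bullet> wE i = 0"
    "m < T \<Longrightarrow> n < T \<Longrightarrow> r m \<bullet> r n = (if m = n then 1 else 0)"
    "(WV2 *v wE i) \<bullet> (WV2 *v wE j) = (if i = j then 1 else 0)"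
    "(WV2 *v wE i) \<bullet> (WV2 *v (\<Phi>1 *v wE j)) = 0"
proof -
  define F where "F = (\<lambda>i. case i of OE v \<Rightarrow> wE v | OP v \<Rightarrow> \<Phi>1 *v wE v | OU v \<Rightarrow> wU v | OR n \<Rightarrow> r n)"
  define I where "I = (range OE \<union> range OP \<union> range OU \<union> OR ` {..<T} :: 'v oidx set)"
  define G where "G = (\<lambda>i. case i of Inl v \<Rightarrow> WV2 *v wE v | Inr v \<Rightarrow> WV2 *v (\<Phi>1 *v wE v))"
  have F: "\<And>i j. i \<in> I \<Longrightarrow> j \<in> I \<Longrightarrow> F i \<bullet> F j = (if i = j then 1 else 0)"
    and G: "\<And>i j. G i \<bullet> G j = (if i = j then 1 else 0)"
    using orthonormal unfolding orthonormal_A_def Let_def F_def I_def G_def by blast+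
  show "wE i \<bullet> wE j = (if i = j then 1 else 0)" using F[of "OE i" "OE j"] by (simp add: F_def I_def)
  show "wE i \<bullet> (\<Phi>1 *v wE j) = 0" using F[of "OE i" "OP j"] by (simp add: F_def I_def)
  show "(\<Phi>1 *v wE j) \<bullet> wE i = 0" using F[of "OP j" "OE i"] by (simp add: F_def I_def)
  show "(\<Phi>1 *v wE i) \<bullet> (\<Phi>1 *v wE j) = (if i = j then 1 else 0)"
    using F[of "OP i" "OP j"] by (simp add: F_def I_def)
  show "wE i \<bullet> wU j = 0" using F[of "OE i" "OU j"] by (simp add: F_def I_def)
  show "wU j \<bullet> wE i = 0" using F[of "OU j" "OE i"] by (simp add: F_def I_def)
  show "(\<Phi>1 *v wE i) \<bullet> wU j = 0" using F[of "OP i" "OU j"] by (simp add: F_def I_def)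
  show "wU j \<bullet> (\<Phi>1 *v wE i) = 0" using F[of "OU j" "OP i"] by (simp add: F_def I_def)
  show "wU i \<bullet> wU j = (if i = j then 1 else 0)" using F[of "OU i" "OU j"] by (simp add: F_def I_def)
  show "n < T \<Longrightarrow> wE i \<bullet> r n = 0" using F[of "OE i" "OR n"] by (simp add: F_def I_def)
  show "n < T \<Longrightarrow> r n \<bullet> wE i = 0" using F[of "OR n" "OE i"] by (simp add: F_def I_def)
  show "m < T \<Longrightarrow> n < T \<Longrightarrow> r m \<bullet> r n = (if m = n then 1 else 0)"
    using F[of "OR m" "OR n"] by (simp add: F_def I_def)
  show "(WV2 *v wE i) \<bullet> (WV2 *v wE j) = (if i = j then 1 else 0)"
    using G[of "Inl i" "Inl j"] by (simp add: G_def)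
  show "(WV2 *v wE i) \<bullet> (WV2 *v (\<Phi>1 *v wE j)) = 0"
    using G[of "Inl i" "Inr j"] by (simp add: G_def)
qed

definition layer1 :: "(nat \<Rightarrow> 'v) \<Rightarrow> real \<Rightarrow> nat \<Rightarrow> real^'d" where
  "layer1 z \<tau>1 t =
     (\<Sum>s\<in>{1..t}. softmax {1..t} (\<lambda>s. (wE (z s) + r (t - s)) \<bullet>
        (transpose (\<tau>1 *\<^sub>R (\<Sum>k\<in>UNIV. outer (wE k) (r 1))) *v wE (z t))) s *\<^sub>R (\<Phi>1 *v wE (z s)))
     + wE (z t)"

definition layer2 :: "(nat \<Rightarrow> 'v) \<Rightarrow> real \<Rightarrow> real \<Rightarrow> real \<Rightarrow> real^'d" where
  "layer2 z \<tau>1 \<tau>2 \<tau>3 =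
     (\<Sum>s\<in>{1..T}. softmax {1..T} (\<lambda>s. layer1 z \<tau>1 s \<bullet>
        (transpose (\<tau>2 *\<^sub>R (\<Sum>k\<in>UNIV. outer (wE k) (\<Phi>1 *v wE k))) *v layer1 z \<tau>1 T)) s
      *\<^sub>R ((\<tau>3 *\<^sub>R (\<Sum>u\<in>UNIV. outer (wU u) (WV2 *v wE u)) ** WV2) *v layer1 z \<tau>1 s))
     + layer1 z \<tau>1 T"

definition feed_forward :: "('v \<Rightarrow> 'v \<Rightarrow> real) \<Rightarrow> real^'d \<Rightarrow> real^'d" where
  "feed_forward pib x =
     ((\<chi> i u. (\<Sum>w\<in>UNIV. ln (pib w u) *\<^sub>R wU w) $ i) :: real^'v^'d)
       *v (\<chi> u. max 0 ((((\<chi> u. wE u) :: real^'d^'v) *v x) $ u)) + x"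

lemma xi_eq_feed_forward_layer2:
  "xi wE wU r \<Phi>1 WV2 pib T z \<tau>1 \<tau>2 \<tau>3 v = wU v \<bullet> feed_forward pib (layer2 z \<tau>1 \<tau>2 \<tau>3)"
  unfolding xi_def Let_def feed_forward_def layer2_def layer1_def by (rule refl)

lemma layer1_score:
  assumes "t \<le> T" "s \<in> {1..t}"
  shows "(wE (z s) + r (t - s)) \<bullet> (transpose (\<tau>1 *\<^sub>R (\<Sum>k\<in>UNIV. outer (wE k) (r 1))) *v wE (z t))
    = \<tau>1 * (if s + 1 = t then 1 else 0)"
proof -
  have "t - s < T" "1 < T"
    using assms T_ge_2 by auto
  then show ?thesis
    unfolding transpose_scalar scaleR_matrix_vector_assoc[symmetric] transpose_sum_outer_mult_vec
    using assms(2) by (auto simp: inner_add_left inner_basis)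
qed

lemma layer1_eq:
  "t \<le> T \<Longrightarrow> layer1 z \<tau>1 t = (\<Sum>s\<in>{1..t}. prev_attention \<tau>1 t s *\<^sub>R (\<Phi>1 *v wE (z s))) + wE (z t)"
  unfolding layer1_def prev_attention_def using layer1_score
  by (auto intro!: sum.cong softmax_cong)

lemma inner_embedding_layer1:
  "t \<le> T \<Longrightarrow> wE k \<bullet> layer1 z \<tau>1 t = (if k = z t then 1 else 0)"
  by (simp add: layer1_eq inner_add_right inner_sum_right inner_basis)

lemma inner_layer1_value:
  "t \<le> T \<Longrightarrow> layer1 z \<tau>1 t \<bullet> (\<Phi>1 *v wE k) = attention_on_token z k \<tau>1 t"
  by (simp add: layer1_eq attention_on_token_def inner_add_left inner_sum_left inner_basis)

lemma layer2_score:
  assumes "s \<le> T" "z T = q"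
  shows "layer1 z \<tau>1 s \<bullet> (transpose (\<tau>2 *\<^sub>R (\<Sum>k\<in>UNIV. outer (wE k) (\<Phi>1 *v wE k))) *v layer1 z \<tau>1 T)
    = \<tau>2 * attention_on_token z q \<tau>1 s"
proof -
  have "transpose (\<tau>2 *\<^sub>R (\<Sum>k\<in>UNIV. outer (wE k) (\<Phi>1 *v wE k))) *v layer1 z \<tau>1 T = \<tau>2 *\<^sub>R (\<Phi>1 *v wE q)"
    unfolding transpose_scalar scaleR_matrix_vector_assoc[symmetric] transpose_sum_outer_mult_vec
    using assms by (simp add: inner_embedding_layer1)
  then show ?thesis
    using assms by (simp add: inner_layer1_value)
qed

lemma layer2_value:
  assumes "s \<le> T"
  shows "(\<tau>3 *\<^sub>R (\<Sum>u\<in>UNIV. outer (wU u) (WV2 *v wE u)) ** WV2) *v layer1 z \<tau>1 s = \<tau>3 *\<^sub>R wU (z s)"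
  unfolding matrix_vector_mul_assoc[symmetric] scaleR_matrix_vector_assoc[symmetric] sum_outer_mult_vec
  using assms
  by (simp add: layer1_eq linear_sum[OF matrix_vector_mul_linear] matrix_vector_right_distrib
      matrix_vector_mult_scaleR inner_add_right inner_sum_right inner_basis)

lemma layer2_eq:
  assumes "z T = q"
  shows "layer2 z \<tau>1 \<tau>2 \<tau>3 =
    (\<Sum>s\<in>{1..T}. softmax {1..T} (\<lambda>s. \<tau>2 * attention_on_token z q \<tau>1 s) s *\<^sub>R \<tau>3 *\<^sub>R wU (z s))
    + layer1 z \<tau>1 T"
  unfolding layer2_def using assms layer2_score layer2_value
  by (auto intro!: sum.cong softmax_cong)

lemma inner_embedding_layer2:
  "z T = q \<Longrightarrow> wE u \<bullet> layer2 z \<tau>1 \<tau>2 \<tau>3 = (if u = q then 1 else 0)"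
  by (simp add: layer2_eq inner_add_right inner_sum_right inner_basis inner_embedding_layer1)

lemma inner_unembedding_layer2:
  "z T = q \<Longrightarrow> wU v \<bullet> layer2 z \<tau>1 \<tau>2 \<tau>3 =
    \<tau>3 * (\<Sum>s\<in>{1..T}. softmax {1..T} (\<lambda>s. \<tau>2 * attention_on_token z q \<tau>1 s) s * (if z s = v then 1 else 0))"
  by (simp add: layer2_eq layer1_eq inner_add_right inner_sum_right inner_basis sum_distrib_left mult_ac)
    (auto intro!: sum.cong)

lemma inner_unembedding_feed_forward:
  assumes "\<And>u. wE u \<bullet> x = (if u = q then 1 else 0)"
  shows "wU v \<bullet> feed_forward pib x = ln (pib v q) + wU v \<bullet> x"
proof -
  have "(\<chi> u. max 0 ((((\<chi> u. wE u) :: real^'d^'v) *v x) $ u)) = (\<chi> u. if u = q then 1 else 0)"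
    using assms by (simp add: vec_eq_iff matrix_vector_mult_def inner_vec_def)
  moreover have "((\<chi> i u. (\<Sum>w\<in>UNIV. ln (pib w u) *\<^sub>R wU w) $ i) :: real^'v^'d) *v (\<chi> u. if u = q then 1 else 0)
      = (\<Sum>w\<in>UNIV. ln (pib w q) *\<^sub>R wU w)"
    by (simp add: matrix_vector_mult_def vec_eq_iff if_distrib cong: if_cong)
  ultimately show ?thesis
    unfolding feed_forward_def
    by (simp add: inner_add_right inner_sum_right inner_basis if_distrib[of "(*) _"] cong: if_cong)
qed

lemma xi_closed_form:
  assumes "z T = q"
  shows "xi wE wU r \<Phi>1 WV2 pib T z \<tau>1 \<tau>2 \<tau>3 v = ln (pib v q) +
    \<tau>3 * (\<Sum>s\<in>{1..T}. softmax {1..T} (\<lambda>s. \<tau>2 * attention_on_token z q \<tau>1 s) s * (if z s = v then 1 else 0))"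
  using assms
  by (simp add: xi_eq_feed_forward_layer2 inner_unembedding_feed_forward inner_embedding_layer2
      inner_unembedding_layer2)

lemma tendsto_xi_at_top_tau1:
  assumes "z T = q"
  shows "((\<lambda>\<tau>1. xi wE wU r \<Phi>1 WV2 pib T z \<tau>1 \<tau>2 \<tau>3 v) \<longlongrightarrow> ln (pib v q) +
    \<tau>3 * (\<Sum>s\<in>{1..T}. softmax {1..T} (\<lambda>s. \<tau>2 * prev_token_is z q s) s * (if z s = v then 1 else 0)))
    at_top"
proof -
  have "((\<lambda>\<tau>1. softmax {1..T} (\<lambda>s. \<tau>2 * attention_on_token z q \<tau>1 s) s)
      \<longlongrightarrow> softmax {1..T} (\<lambda>s. \<tau>2 * prev_token_is z q s) s) at_top" if "s \<in> {1..T}" for s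
    using that T_ge_2 by (intro tendsto_softmax tendsto_mult_left tendsto_attention_on_token) auto
  then show ?thesis
    unfolding xi_closed_form[where z = z and q = q, OF assms]
    by (intro tendsto_add tendsto_const tendsto_mult_left tendsto_sum tendsto_mult_right)
qed

end

lemma real_card_filter: "finite A \<Longrightarrow> real (card {x\<in>A. P x}) = (\<Sum>x\<in>A. if P x then 1 else 0)"
  by (simp add: sum.inter_filter[symmetric])

lemma sum_prev_token_is_mult_token:
  assumes "T \<ge> 2"
  shows "(\<Sum>s\<in>{1..T}. prev_token_is z q s * (if z s = v then 1 else 0)) =
    real (pattern_count z T q v) + (if v = q \<and> z 1 = q then 1 else 0)"
proof -
  have "(\<Sum>s\<in>{2..T}. prev_token_is z q s * (if z s = v then 1 else 0))
      = (\<Sum>s\<in>{2..T}. if z (s - 1) = q \<and> z s = v then 1 else 0)"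
    by (intro sum.cong) (auto simp: prev_token_is_def)
  also have "\<dots> = real (pattern_count z T q v)"
    unfolding pattern_count_def real_card_filter[OF finite_atLeastAtMost] ..
  finally show ?thesis
    using assms by (auto simp: sum.atLeast_Suc_atMost numeral_2_eq_2 prev_token_is_def)
qed

lemma sum_prev_token_is:
  fixes z :: "nat \<Rightarrow> 'v::finite"
  assumes "T \<ge> 2"
  shows "(\<Sum>s\<in>{1..T}. prev_token_is z q s) = real (Ncount z T q)"
proof -
  have "real (\<Sum>v\<in>UNIV. pattern_count z T q v)
      = (\<Sum>v\<in>UNIV. \<Sum>s\<in>{2..T}. if z (s - 1) = q \<and> z s = v then 1 else 0)"
    unfolding pattern_count_def of_nat_sum real_card_filter[OF finite_atLeastAtMost] ..
  also have "\<dots> = (\<Sum>s\<in>{2..T}. prev_token_is z q s)"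
    by (subst sum.swap) (auto intro!: sum.cong simp: prev_token_is_def)
  finally show ?thesis
    using assms by (simp add: Ncount_def prev_token_is_def sum.atLeast_Suc_atMost numeral_2_eq_2)
qed

lemma tendsto_softmax_prev_token_mass:
  fixes z :: "nat \<Rightarrow> 'v::finite"
  assumes "T \<ge> 2" and "Ncount z T q \<ge> 1"
  shows "((\<lambda>\<tau>. \<Sum>s\<in>{1..T}. softmax {1..T} (\<lambda>s. \<tau> * prev_token_is z q s) s * (if z s = v then 1 else 0))
    \<longlongrightarrow> (real (pattern_count z T q v) + (if v = q \<and> z 1 = q then 1 else 0)) / real (Ncount z T q)) at_top"
proof -
  have N: "(\<Sum>s\<in>{1..T}. prev_token_is z q s) = real (Ncount z T q)"
    using sum_prev_token_is[OF assms(1)] .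
  have N_pos: "(\<Sum>s\<in>{1..T}. prev_token_is z q s) > 0"
    using assms(2) N by simp
  have prev_01: "prev_token_is z q s = 0 \<or> prev_token_is z q s = 1" for s
    by (simp add: prev_token_is_def)
  have "((\<lambda>\<tau>. \<Sum>s\<in>{1..T}. softmax {1..T} (\<lambda>s. \<tau> * prev_token_is z q s) s * (if z s = v then 1 else 0))
      \<longlongrightarrow> (\<Sum>s\<in>{1..T}. prev_token_is z q s / real (Ncount z T q) * (if z s = v then 1 else 0))) at_top"
    unfolding N[symmetric] using N_pos prev_01
    by (intro tendsto_sum tendsto_mult_right tendsto_softmax_scaled_01) auto
  also have "(\<Sum>s\<in>{1..T}. prev_token_is z q s / real (Ncount z T q) * (if z s = v then 1 else 0))
      = (\<Sum>s\<in>{1..T}. prev_token_is z q s * (if z s = v then 1 else 0)) / real (Ncount z T q)"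
    by (simp add: sum_divide_distrib)
  also have "\<dots> = (real (pattern_count z T q v) + (if v = q \<and> z 1 = q then 1 else 0)) / real (Ncount z T q)"
    unfolding sum_prev_token_is_mult_token[OF assms(1)] ..
  finally show ?thesis .
qed

theorem proposition3:
  fixes wE wU :: "'v::finite \<Rightarrow> real^'d::finite" and r :: "nat \<Rightarrow> real^'d"
    and \<Phi>1 WV2 :: "real^'d^'d" and pib :: "'v \<Rightarrow> 'v \<Rightarrow> real"
    and T :: nat and z :: "nat \<Rightarrow> 'v" and q v :: 'v and \<tau>3 :: real
  assumes "T \<ge> 2" and "z T = q"
    and "\<forall>u w. pib u w > 0" and "\<forall>w. (\<Sum>u\<in>UNIV. pib u w) = 1"
    and "orthonormal_A wE wU r \<Phi>1 WV2 T"
    and "Ncount z T q \<ge> 1"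
    and "\<tau>3 > 0"
  shows "\<exists>g. (\<forall>\<tau>2>0. ((\<lambda>\<tau>1. xi wE wU r \<Phi>1 WV2 pib T z \<tau>1 \<tau>2 \<tau>3 v) \<longlongrightarrow> g \<tau>2) at_top) \<and>
             (g \<longlongrightarrow> ln (pib v q) + \<tau>3 * (real (pattern_count z T q v)
                 + (if v = q \<and> z 1 = q then 1 else 0)) / real (Ncount z T q)) at_top"
proof -
  interpret orthonormal_transformer wE wU r \<Phi>1 WV2 T
    using assms(1,5) by unfold_locales
  define g where "g \<tau>2 = ln (pib v q) + \<tau>3 *
    (\<Sum>s\<in>{1..T}. softmax {1..T} (\<lambda>s. \<tau>2 * prev_token_is z q s) s * (if z s = v then 1 else 0))" for \<tau>2
  have "((\<lambda>\<tau>1. xi wE wU r \<Phi>1 WV2 pib T z \<tau>1 \<tau>2 \<tau>3 v) \<longlongrightarrow> g \<tau>2) at_top" for \<tau>2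
    unfolding g_def using tendsto_xi_at_top_tau1[where z = z and q = q, OF assms(2)] .
  moreover have "(g \<longlongrightarrow> ln (pib v q) + \<tau>3 * ((real (pattern_count z T q v)
      + (if v = q \<and> z 1 = q then 1 else 0)) / real (Ncount z T q))) at_top"
    unfolding g_def by (intro tendsto_add tendsto_const tendsto_mult_left tendsto_softmax_prev_token_mass assms)
  ultimately show ?thesis
    unfolding times_divide_eq_right by blast
qed

end
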